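(* For every closed convex cone $K$ in a finite-dimensional real Euclidean space $\mathbb{E}$, the tangential depth of $K$ is at most $\dim K$.
   Context: For a closed convex set $C$ and $x\in C$, $\mathcal{T}(x;C)=\operatorname{cl}\{d: x+\epsilon d\in C\text{ for some }\epsilon>0\}$ is the tangent cone. For a family $\mathcal{K}$ of closed convex sets, $\mathcal{T}(\mathcal{K})$ denotes the set of all tangent cones $\mathcal{T}(x;C)$ with $C\in\mathcal{K}$ and $x\in C$. Set $\mathcal{T}^0(\mathcal{K})=\mathcal{K}$ and $\mathcal{T}^k(\mathcal{K})=\mathcal{T}(\mathcal{T}^{k-1}(\mathcal{K}))$ for $k\ge 1$; for a single set $C$ write $\mathcal{T}^k(C)$ for $\mathcal{T}^k(\{C\})$. The tangential depth of a closed convex set $C$ is the smallest nonnegative integer $k$ such that $\mathcal{T}^{k+1}(C)=\mathcal{T}^k(C)$. *)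

theory Defs
  imports "HOL-Analysis.Analysis"
begin

definition tangent_cone :: "'a::euclidean_space \<Rightarrow> 'a set \<Rightarrow> 'a set" where
  "tangent_cone x C = closure {d. \<exists>\<epsilon>>0. x + \<epsilon> *\<^sub>R d \<in> C}"

definition tangent_family :: "'a::euclidean_space set set \<Rightarrow> 'a set set" where
  "tangent_family \<K> = {tangent_cone x C | C x. C \<in> \<K> \<and> x \<in> C}"

definition tangent_iter :: "nat \<Rightarrow> 'a::euclidean_space set set \<Rightarrow> 'a set set" where
  "tangent_iter k \<K> = (tangent_family ^^ k) \<K>"

definition tangential_depth :: "'a::euclidean_space set \<Rightarrow> nat" where
  "tangential_depth C = (LEAST k. tangent_iter (Suc k) {C} = tangent_iter k {C})"

end

theory Submission
  imports Defs
begin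

text \<open>
  For a closed convex cone \<open>C\<close> and \<open>x \<in> C\<close>, the tangent cone \<open>T(x;C)\<close> is again a closed
  convex cone; it contains \<open>C\<close> and \<open>-x\<close> and lies in the span of \<open>C\<close>. Hence its lineality space
  \<open>T(x;C) \<inter> -T(x;C)\<close> contains that of \<open>C\<close> together with \<open>x\<close>. Either \<open>x\<close> already lies in
  the lineality space of \<open>C\<close>, and then \<open>T(x;C) = C\<close>, or the codimension of the lineality space
  inside \<open>span C\<close> strictly drops. Starting from \<open>K\<close> this codimension is at most \<open>dim K\<close>, so after
  \<open>dim K\<close> steps every further tangent cone reproduces a cone already present; conversely the
  iterated families only grow, because \<open>T(0;C) = C\<close>.
\<close>

definition lineality :: "'a::real_vector set \<Rightarrow> 'a set" where
  "lineality C = {x \<in> C. - x \<in> C}"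

definition feasible_directions :: "'a::real_vector \<Rightarrow> 'a set \<Rightarrow> 'a set" where
  "feasible_directions x C = {d. \<exists>\<epsilon>>0. x + \<epsilon> *\<^sub>R d \<in> C}"

lemma convex_cone_iff_nonempty_convex_cone:
  "convex_cone C \<longleftrightarrow> C \<noteq> {} \<and> convex C \<and> cone C"
  by (auto simp: convex_cone_def conic_def cone_def)

lemma lineality_subset: "lineality C \<subseteq> C"
  by (auto simp: lineality_def)

lemma subspace_lineality:
  assumes "convex_cone C"
  shows "subspace (lineality C)"
  unfolding subspace_def
proof (intro conjI ballI allI)
  show "0 \<in> lineality C"
    using convex_cone_contains_0[OF assms] by (simp add: lineality_def)
  fix a b assume "a \<in> lineality C" "b \<in> lineality C"
  then show "a + b \<in> lineality C"
    using convex_cone_add[OF assms, of a b] convex_cone_add[OF assms, of "-a" "-b"]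
    by (simp add: lineality_def)
next
  fix c :: real and a assume a: "a \<in> lineality C"
  have scale: "t *\<^sub>R a \<in> C \<and> - (t *\<^sub>R a) \<in> C" if "0 \<le> t" for t
    using a that convex_cone_scaleR[OF assms, of t a] convex_cone_scaleR[OF assms, of t "- a"]
    by (simp add: lineality_def)
  show "c *\<^sub>R a \<in> lineality C"
    using scale[of c] scale[of "- c"] by (cases "c \<ge> 0") (auto simp: lineality_def)
qed

lemma tangent_cone_eq_closure: "tangent_cone x C = closure (feasible_directions x C)"
  by (simp add: tangent_cone_def feasible_directions_def)

lemma feasible_direction_shrink:
  assumes "convex_cone C" "x \<in> C" "x + \<epsilon> *\<^sub>R d \<in> C" "0 < \<delta>" "\<delta> \<le> \<epsilon>"
  shows "x + \<delta> *\<^sub>R d \<in> C"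
proof -
  define t where "t = \<delta> / \<epsilon>"
  have t: "0 \<le> t" "t \<le> 1" using assms(4,5) by (auto simp: t_def)
  have "(1 - t) *\<^sub>R x \<in> C" "t *\<^sub>R (x + \<epsilon> *\<^sub>R d) \<in> C"
    using t assms(2,3) convex_cone_scaleR[OF assms(1)] by simp_all
  then have "(1 - t) *\<^sub>R x + t *\<^sub>R (x + \<epsilon> *\<^sub>R d) \<in> C"
    by (rule convex_cone_add[OF assms(1)])
  moreover have "(1 - t) *\<^sub>R x + t *\<^sub>R (x + \<epsilon> *\<^sub>R d) = x + \<delta> *\<^sub>R d"
    using assms(4,5) by (simp add: t_def algebra_simps)
  ultimately show ?thesis by simp
qed

lemma convex_cone_feasible_directions:
  assumes C: "convex_cone C" and x: "x \<in> C"
  shows "convex_cone (feasible_directions x C)"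
  unfolding convex_cone_iff
proof (intro conjI ballI allI impI)
  show "0 \<in> feasible_directions x C"
    using x by (auto simp: feasible_directions_def intro: exI[of _ 1])
next
  fix a b assume "a \<in> feasible_directions x C" "b \<in> feasible_directions x C"
  then obtain \<epsilon>\<^sub>a \<epsilon>\<^sub>b where "\<epsilon>\<^sub>a > 0" "x + \<epsilon>\<^sub>a *\<^sub>R a \<in> C" "\<epsilon>\<^sub>b > 0" "x + \<epsilon>\<^sub>b *\<^sub>R b \<in> C"
    by (auto simp: feasible_directions_def)
  then have "x + min \<epsilon>\<^sub>a \<epsilon>\<^sub>b *\<^sub>R a \<in> C" "x + min \<epsilon>\<^sub>b \<epsilon>\<^sub>a *\<^sub>R b \<in> C"
    using feasible_direction_shrink[OF C x] by auto
  then have "(1/2) *\<^sub>R ((x + min \<epsilon>\<^sub>a \<epsilon>\<^sub>b *\<^sub>R a) + (x + min \<epsilon>\<^sub>a \<epsilon>\<^sub>b *\<^sub>R b)) \<in> C"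
    by (simp add: convex_cone_add[OF C] convex_cone_scaleR[OF C] min.commute)
  also have "(1/2) *\<^sub>R ((x + min \<epsilon>\<^sub>a \<epsilon>\<^sub>b *\<^sub>R a) + (x + min \<epsilon>\<^sub>a \<epsilon>\<^sub>b *\<^sub>R b))
      = x + (min \<epsilon>\<^sub>a \<epsilon>\<^sub>b / 2) *\<^sub>R (a + b)"
    by (simp add: algebra_simps flip: scaleR_2)
  finally show "a + b \<in> feasible_directions x C"
    using \<open>\<epsilon>\<^sub>a > 0\<close> \<open>\<epsilon>\<^sub>b > 0\<close>
    by (auto simp: feasible_directions_def intro!: exI[of _ "min \<epsilon>\<^sub>a \<epsilon>\<^sub>b / 2"])
next
  fix a and c :: real assume "a \<in> feasible_directions x C" and "0 \<le> c"
  then obtain \<epsilon> where "\<epsilon> > 0" "x + \<epsilon> *\<^sub>R a \<in> C" by (auto simp: feasible_directions_def)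
  show "c *\<^sub>R a \<in> feasible_directions x C"
  proof (cases "c = 0")
    case True
    then show ?thesis using x by (auto simp: feasible_directions_def intro: exI[of _ 1])
  next
    case False
    then have "x + (\<epsilon> / c) *\<^sub>R (c *\<^sub>R a) \<in> C" "\<epsilon> / c > 0"
      using \<open>\<epsilon> > 0\<close> \<open>x + \<epsilon> *\<^sub>R a \<in> C\<close> \<open>0 \<le> c\<close> by auto
    then show ?thesis by (auto simp: feasible_directions_def)
  qed
qed

lemma subset_feasible_directions:
  assumes "convex_cone C" "x \<in> C"
  shows "C \<subseteq> feasible_directions x C"
  using assms convex_cone_add[OF assms(1), of x]
  by (auto simp: feasible_directions_def intro!: exI[of _ 1])

lemma uminus_in_feasible_directions:
  assumes "convex_cone C"
  shows "- x \<in> feasible_directions x C"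
  using convex_cone_contains_0[OF assms]
  by (auto simp: feasible_directions_def intro!: exI[of _ 1])

lemma feasible_directions_subset_span:
  assumes "x \<in> C"
  shows "feasible_directions x C \<subseteq> span C"
proof
  fix d assume "d \<in> feasible_directions x C"
  then obtain \<epsilon> where "\<epsilon> > 0" "x + \<epsilon> *\<^sub>R d \<in> C" by (auto simp: feasible_directions_def)
  then have "(1/\<epsilon>) *\<^sub>R ((x + \<epsilon> *\<^sub>R d) - x) \<in> span C"
    using assms by (intro span_scale span_diff span_base)
  then show "d \<in> span C" using \<open>\<epsilon> > 0\<close> by simp
qed

lemma feasible_directions_lineality:
  assumes "convex_cone C" "x \<in> lineality C"
  shows "feasible_directions x C = C"
proof
  show "feasible_directions x C \<subseteq> C"
  proof
    fix d assume "d \<in> feasible_directions x C"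
    then obtain \<epsilon> where "\<epsilon> > 0" "x + \<epsilon> *\<^sub>R d \<in> C" by (auto simp: feasible_directions_def)
    moreover have "- x \<in> C"
      using assms(2) by (simp add: lineality_def)
    ultimately have "(x + \<epsilon> *\<^sub>R d) + - x \<in> C"
      using convex_cone_add[OF assms(1)] by blast
    then have "\<epsilon> *\<^sub>R d \<in> C" by simp
    have "(1/\<epsilon>) *\<^sub>R (\<epsilon> *\<^sub>R d) \<in> C"
      by (rule convex_cone_scaleR[OF assms(1)]) (use \<open>\<epsilon> > 0\<close> \<open>\<epsilon> *\<^sub>R d \<in> C\<close> in auto)
    then show "d \<in> C" using \<open>\<epsilon> > 0\<close> by simp
  qed
  show "C \<subseteq> feasible_directions x C"
    using assms lineality_subset subset_feasible_directions by blast
qed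

lemma closed_tangent_cone: "closed (tangent_cone x C)"
  by (simp add: tangent_cone_eq_closure)

context
  fixes C :: "'a::euclidean_space set" and x :: 'a
  assumes closed_C: "closed C" and convex_cone_C: "convex_cone C" and x_in_C: "x \<in> C"
begin

lemma convex_cone_tangent_cone: "convex_cone (tangent_cone x C)"
  using convex_cone_feasible_directions[OF convex_cone_C x_in_C] closure_subset[of "feasible_directions x C"]
  by (auto simp: tangent_cone_eq_closure convex_cone_iff_nonempty_convex_cone convex_closure cone_closure)

lemma subset_tangent_cone: "C \<subseteq> tangent_cone x C"
  using subset_feasible_directions[OF convex_cone_C x_in_C] closure_subset
  by (fastforce simp: tangent_cone_eq_closure)

lemma uminus_in_tangent_cone: "- x \<in> tangent_cone x C"
  using uminus_in_feasible_directions[OF convex_cone_C] closure_subset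
  by (fastforce simp: tangent_cone_eq_closure)

lemma tangent_cone_subset_span: "tangent_cone x C \<subseteq> span C"
  unfolding tangent_cone_eq_closure
  by (rule closure_minimal[OF feasible_directions_subset_span[OF x_in_C] closed_span])

lemma tangent_cone_lineality:
  assumes "x \<in> lineality C"
  shows "tangent_cone x C = C"
  by (simp add: tangent_cone_eq_closure feasible_directions_lineality[OF convex_cone_C assms] closed_C)

lemma dim_lineality_tangent_cone:
  assumes "x \<notin> lineality C"
  shows "dim (lineality C) < dim (lineality (tangent_cone x C))"
proof -
  let ?L = "lineality (tangent_cone x C)"
  have "insert x (lineality C) \<subseteq> ?L"
    using subset_tangent_cone uminus_in_tangent_cone x_in_C by (auto simp: lineality_def)
  then have "dim (insert x (lineality C)) \<le> dim ?L"
    by (rule dim_subset)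
  moreover have "x \<notin> span (lineality C)"
    using assms subspace_lineality[OF convex_cone_C] by (metis span_eq_iff)
  ultimately show ?thesis by (simp add: dim_insert)
qed

lemma codim_lineality_tangent_cone_less:
  assumes "x \<notin> lineality C"
  shows "dim (tangent_cone x C) - dim (lineality (tangent_cone x C)) < dim C - dim (lineality C)"
proof -
  have "dim (lineality (tangent_cone x C)) \<le> dim (tangent_cone x C)"
    by (rule dim_subset[OF lineality_subset])
  moreover have "dim (tangent_cone x C) \<le> dim C"
    using dim_subset[OF tangent_cone_subset_span] by simp
  ultimately show ?thesis
    using dim_lineality_tangent_cone[OF assms] by linarith
qed

end

lemma tangent_family_Union: "tangent_family (\<Union>\<A>) = (\<Union>\<K>\<in>\<A>. tangent_family \<K>)"
  unfolding tangent_family_def by blast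

lemma tangent_iter_0: "tangent_iter 0 \<K> = \<K>"
  by (simp add: tangent_iter_def)

lemma tangent_iter_Suc: "tangent_iter (Suc n) \<K> = tangent_iter n (tangent_family \<K>)"
  by (simp only: tangent_iter_def funpow_Suc_right comp_apply)

lemma tangent_iter_Union: "tangent_iter n (\<Union>\<A>) = (\<Union>\<K>\<in>\<A>. tangent_iter n \<K>)"
  by (induction n arbitrary: \<A>) (simp_all add: tangent_iter_0 tangent_iter_Suc tangent_family_Union image_image)

lemma tangent_iter_Suc_singleton:
  "tangent_iter (Suc n) {C} = (\<Union>x\<in>C. tangent_iter n {tangent_cone x C})"
proof -
  have "tangent_family {C} = (\<Union>x\<in>C. {tangent_cone x C})"
    unfolding tangent_family_def by blast
  then show ?thesis
    by (simp add: tangent_iter_Suc tangent_iter_Union image_image)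
qed

lemma tangent_iter_tangent_cone_subset:
  assumes "closed C" "convex_cone C" "x \<in> C" "dim C - dim (lineality C) \<le> n"
  shows "tangent_iter n {tangent_cone x C} \<subseteq> tangent_iter n {C}"
  using assms
proof (induction n arbitrary: C x)
  case (0 C x)
  then have "x \<in> lineality C"
    using codim_lineality_tangent_cone_less by fastforce
  then show ?case
    using tangent_cone_lineality[OF "0.prems"(1-3)] by simp
next
  case (Suc m C x)
  let ?T = "tangent_cone x C"
  show ?case
  proof (cases "x \<in> lineality C")
    case True
    then show ?thesis using tangent_cone_lineality[OF Suc.prems(1-3)] by simp
  next
    case False
    have T: "closed ?T" "convex_cone ?T"
      using closed_tangent_cone convex_cone_tangent_cone Suc.prems(1-3) by blast+
    have "dim ?T - dim (lineality ?T) \<le> m"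
      using codim_lineality_tangent_cone_less[OF Suc.prems(1-3) False] Suc.prems(4) by linarith
    then have "tangent_iter (Suc m) {?T} \<subseteq> tangent_iter m {?T}"
      using Suc.IH[OF T] by (auto simp: tangent_iter_Suc_singleton)
    also have "\<dots> \<subseteq> tangent_iter (Suc m) {C}"
      using Suc.prems(3) by (auto simp: tangent_iter_Suc_singleton)
    finally show ?thesis .
  qed
qed

lemma tangent_iter_stable:
  assumes "closed C" "convex_cone C" "dim C - dim (lineality C) \<le> n"
  shows "tangent_iter (Suc n) {C} = tangent_iter n {C}"
proof
  show "tangent_iter (Suc n) {C} \<subseteq> tangent_iter n {C}"
    using tangent_iter_tangent_cone_subset[OF assms(1,2) _ assms(3)]
    by (auto simp: tangent_iter_Suc_singleton)
  have "0 \<in> lineality C" "0 \<in> C"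
    using convex_cone_contains_0[OF assms(2)] by (auto simp: lineality_def)
  then have "tangent_iter n {C} = tangent_iter n {tangent_cone 0 C}"
    using tangent_cone_lineality[OF assms(1,2)] by simp
  then show "tangent_iter n {C} \<subseteq> tangent_iter (Suc n) {C}"
    using \<open>0 \<in> C\<close> unfolding tangent_iter_Suc_singleton by blast
qed

theorem theorem3p2:
  fixes K :: "'a::euclidean_space set"
  assumes "closed K" and "convex K" and "cone K" and "K \<noteq> {}"
  shows "tangential_depth K \<le> dim K"
proof -
  have "convex_cone K"
    using assms by (simp add: convex_cone_iff_nonempty_convex_cone)
  then have "tangent_iter (Suc (dim K)) {K} = tangent_iter (dim K) {K}"
    using tangent_iter_stable[OF \<open>closed K\<close>] by simp
  then show ?thesis
    unfolding tangential_depth_def by (rule Least_le)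
qed

end
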